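(* In the setting of the context (with $g$ unimodal, symmetric about $0$ and logconcave): (i) $C(\theta)\ge C(2d_0)\ge 1-\frac{3\alpha}{2}$ for all $\theta\ge 2d_0$; (ii) $C(2d_0)\le 1-\frac{3\alpha}{2}+\frac{\alpha^2}{1+\alpha}$.
   Context: Let $g$ be a probability density on $\mathbb{R}$, unimodal and symmetric about $0$ (i.e. $g(z)=g(-z)$ and $g$ nonincreasing on $[0,\infty)$), and logconcave ($\log g$ concave on its support), with cdf $G$ and quantile function $G^{-1}(t)=\inf\{x:G(x)\ge t\}$. Let $X$ have density $g(x-\theta)$, $\theta\ge0$, and $P_\theta$ the corresponding probability. Fix $\alpha\in(0,1)$, and set $d_0=G^{-1}(\tfrac1{1+\alpha})$. The HPD credible interval (prior $1_{[0,\infty)}(\theta)$, credibility $1-\alpha$) is $[l(X),u(X)]$ with $l(x)=\{x-G^{-1}(\tfrac12+\tfrac{1-\alpha}2G(x))\}1_{(d_0,\infty)}(x)$, $u(x)=x-G^{-1}(\alpha G(x))$ for $x\le d_0$ and $u(x)=x+G^{-1}(\tfrac12+\tfrac{1-\alpha}2G(x))$ for $x>d_0$. The frequentist coverage is $C(\theta)=P_\theta(l(X)\le\theta\le u(X))$. *)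

theory Defs
  imports "HOL-Probability.Probability"
begin

definition is_density :: "(real \<Rightarrow> real) \<Rightarrow> bool" where
  "is_density g \<longleftrightarrow> g \<in> borel_measurable borel \<and> (\<forall>x. 0 \<le> g x)
     \<and> (\<integral>\<^sup>+ x. ennreal (g x) \<partial>lborel) = 1"

definition Gcdf :: "(real \<Rightarrow> real) \<Rightarrow> real \<Rightarrow> real" where
  "Gcdf g x = measure (density lborel (\<lambda>t. ennreal (g t))) {..x}"

definition Gquant :: "(real \<Rightarrow> real) \<Rightarrow> real \<Rightarrow> real" where
  "Gquant g t = Inf {x. t \<le> Gcdf g x}"

definition hpd_d0 :: "(real \<Rightarrow> real) \<Rightarrow> real \<Rightarrow> real" where
  "hpd_d0 g \<alpha> = Gquant g (1 / (1 + \<alpha>))"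

definition hpd_lower :: "(real \<Rightarrow> real) \<Rightarrow> real \<Rightarrow> real \<Rightarrow> real" where
  "hpd_lower g \<alpha> x =
     (if hpd_d0 g \<alpha> < x then x - Gquant g (1/2 + (1 - \<alpha>)/2 * Gcdf g x) else 0)"

definition hpd_upper :: "(real \<Rightarrow> real) \<Rightarrow> real \<Rightarrow> real \<Rightarrow> real" where
  "hpd_upper g \<alpha> x =
     (if x \<le> hpd_d0 g \<alpha> then x - Gquant g (\<alpha> * Gcdf g x)
      else x + Gquant g (1/2 + (1 - \<alpha>)/2 * Gcdf g x))"

definition coverage :: "(real \<Rightarrow> real) \<Rightarrow> real \<Rightarrow> real \<Rightarrow> real" where
  "coverage g \<alpha> \<theta> = measure (density lborel (\<lambda>x. ennreal (g (x - \<theta>))))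
      {x. hpd_lower g \<alpha> x \<le> \<theta> \<and> \<theta> \<le> hpd_upper g \<alpha> x}"

end

theory Submission
  imports Defs
begin

(* Write G for the cdf, Q for the quantile function and d0 = Q(1/(1+alpha)), so that
   G(d0) = 1/(1+alpha) and G(-d0) = alpha G(d0).  Logconcavity of g implies that
   x |-> G(x)/G(x+h) is nondecreasing for every h >= 0 (cdf_shift_ratio); with h = 2 d0 this
   gives G(z) <= alpha G(z + 2 d0) for z <= -d0, strictly unless G(z) = 0 or z = -d0: equality
   would make G geometric on a grid through -d0, 0, d0, forcing G(0)^2 = G(-d0) G(d0), i.e.
   alpha = 1.  The locale sym_logconcave_density collects these facts about g alone; the locale
   hpd_setting adds alpha and treats the HPD interval.

   Substituting X = Z + theta, C(theta) is the mass under the law of g of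
   cover_set theta = {z. l(z+theta) <= theta <= u(z+theta)}.  At theta = 2 d0 this set is, up to
   a null set, its right branch {z. d0 < z + theta, |z| <= Q(tau(z+theta))} with
   tau x = 1/2 + (1-alpha)/2 G(x); the right branch grows with theta, which gives the
   monotonicity in (i).  The numerical bounds follow by sandwiching the right branch at 2 d0
   between ]-d0, Q(tau(3 d0))[ and ]-d0, Q(1 - alpha/2)], using G(-3 d0) <= alpha^2/(1+alpha). *)

lemma nn_integral_lborel_shift:
  "(f::real \<Rightarrow> ennreal) \<in> borel_measurable borel \<Longrightarrow>
     (\<integral>\<^sup>+ t. f (t + h) \<partial>lborel) = (\<integral>\<^sup>+ t. f t \<partial>lborel)"
  using nn_integral_real_affine[of f 1 h] by (simp add: add.commute)

lemma nn_integral_lborel_reflect: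
  "(f::real \<Rightarrow> ennreal) \<in> borel_measurable borel \<Longrightarrow>
     (\<integral>\<^sup>+ t. f (- t) \<partial>lborel) = (\<integral>\<^sup>+ t. f t \<partial>lborel)"
  using nn_integral_real_affine[of f "-1" 0] by simp

locale sym_logconcave_density =
  fixes g :: "real \<Rightarrow> real"
  assumes dens: "is_density g"
    and symm: "\<forall>z. g (- z) = g z"
    and unimodal: "\<forall>x y. 0 \<le> x \<longrightarrow> x \<le> y \<longrightarrow> g y \<le> g x"
    and logconcave: "concave_on {x. 0 < g x} (\<lambda>x. ln (g x))"
begin

lemma g_borel[measurable]: "g \<in> borel_measurable borel"
  using dens by (simp add: is_density_def)

lemma g_nonneg: "0 \<le> g x"
  using dens by (simp add: is_density_def)

abbreviation M :: "real measure" where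
  "M \<equiv> density lborel (\<lambda>t. ennreal (g t))"

lemma real_distribution_M: "real_distribution M"
proof -
  have "prob_space M"
    using dens by (intro prob_spaceI) (simp add: emeasure_density is_density_def)
  then show ?thesis unfolding real_distribution_def real_distribution_axioms_def by simp
qed

sublocale D: cdf_distribution M
  unfolding cdf_distribution_def using real_distribution_M .

lemma Gcdf_eq_cdf: "Gcdf g x = cdf M x"
  by (simp add: Gcdf_def cdf_def)

lemma emeasure_M: "A \<in> sets borel \<Longrightarrow> emeasure M A = (\<integral>\<^sup>+ x. ennreal (g x) * indicator A x \<partial>lborel)"
  by (simp add: emeasure_density)

lemma measure_M_singleton: "measure M {x} = 0"
proof -
  have "AE y in lborel. y \<in> {x} \<longrightarrow> ennreal (g y) = 0"
    using AE_lborel_singleton[of x] by (rule eventually_mono) simp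
  then have "{x} \<in> null_sets M"
    by (subst null_sets_density_iff) auto
  then show ?thesis by (auto simp: measure_def)
qed

lemma measure_lessThan_Gcdf: "measure M {..<x} = Gcdf g x"
proof -
  have "measure M {..x} = measure M ({..<x} \<union> {x})"
    by (metis ivl_disj_un_singleton(2))
  also have "\<dots> = measure M {..<x} + measure M {x}"
    by (rule D.finite_measure_Union) auto
  finally show ?thesis by (simp add: measure_M_singleton Gcdf_def)
qed

lemma Gcdf_reflect: "Gcdf g (- x) = 1 - Gcdf g x"
proof -
  have "emeasure M {..-x} = (\<integral>\<^sup>+ t. ennreal (g t) * indicator {..-x} t \<partial>lborel)"
    by (simp add: emeasure_M)
  also have "\<dots> = (\<integral>\<^sup>+ t. ennreal (g (-t)) * indicator {..-x} (-t) \<partial>lborel)"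
    by (rule nn_integral_lborel_reflect[symmetric]) simp
  also have "\<dots> = (\<integral>\<^sup>+ t. ennreal (g t) * indicator {x..} t \<partial>lborel)"
    using symm by (intro nn_integral_cong) (auto simp: indicator_def)
  also have "\<dots> = emeasure M {x..}"
    by (simp add: emeasure_M)
  finally have "measure M {..-x} = measure M {x..}" by (simp add: measure_def)
  also have "\<dots> = 1 - measure M {..<x}"
    using D.prob_compl[of "{..<x}"] by (simp add: Compl_eq_Diff_UNIV[symmetric] Compl_lessThan)
  finally show ?thesis by (simp add: measure_lessThan_Gcdf Gcdf_def)
qed

lemma Gcdf_mono: "x \<le> y \<Longrightarrow> Gcdf g x \<le> Gcdf g y"
  by (simp add: Gcdf_eq_cdf D.cdf_nondecreasing)

lemma Gcdf_nonneg: "0 \<le> Gcdf g x"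
  by (simp add: Gcdf_eq_cdf D.cdf_nonneg)

lemma Gcdf_le_1: "Gcdf g x \<le> 1"
  by (simp add: Gcdf_eq_cdf D.cdf_bounded_prob)

lemma Gcdf_zero: "Gcdf g 0 = 1/2"
  using Gcdf_reflect[of 0] by simp

lemma Gquant_le_iff: "0 < t \<Longrightarrow> t < 1 \<Longrightarrow> Gquant g t \<le> x \<longleftrightarrow> t \<le> Gcdf g x"
  using D.pseudoinverse[of t x] by (simp add: Gquant_def Gcdf_eq_cdf)

lemma less_Gquant_iff: "0 < t \<Longrightarrow> t < 1 \<Longrightarrow> x < Gquant g t \<longleftrightarrow> Gcdf g x < t"
  using Gquant_le_iff[of t x] by auto

lemma Gquant_mono: assumes "0 < s" "s \<le> t" "t < 1" shows "Gquant g s \<le> Gquant g t"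
proof -
  have "t \<le> Gcdf g (Gquant g t)"
    using Gquant_le_iff[of t "Gquant g t"] assms by simp
  then show ?thesis using Gquant_le_iff[of s "Gquant g t"] assms by simp
qed

text \<open>Since \<open>G\<close> is continuous, \<open>G (Q t) = t\<close>.\<close>

lemma Gcdf_Gquant: assumes "0 < t" "t < 1" shows "Gcdf g (Gquant g t) = t"
proof (rule antisym)
  let ?q = "Gquant g t"
  have "eventually (\<lambda>x. x \<in> {?q - 1<..<?q}) (at_left ?q)"
    by (rule eventually_at_left_real) simp
  then have "eventually (\<lambda>x. cdf M x \<le> t) (at_left ?q)"
    by (rule eventually_mono) (use less_Gquant_iff[OF assms] in \<open>auto simp: Gcdf_eq_cdf\<close>)
  then have "measure M {..<?q} \<le> t"
    by (intro tendsto_upperbound[OF D.cdf_at_left]) auto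
  then show "Gcdf g ?q \<le> t" by (simp add: measure_lessThan_Gcdf)
  show "t \<le> Gcdf g ?q" using Gquant_le_iff[OF assms, of ?q] by simp
qed

lemma measure_Gcdf_zero: "measure M {z. Gcdf g z = 0} = 0"
proof (rule ccontr)
  let ?N = "{z. Gcdf g z = 0}"
  assume "measure M ?N \<noteq> 0"
  then have m: "0 < measure M ?N" using measure_nonneg[of M ?N] by linarith
  define t where "t = min (measure M ?N / 2) (1/2)"
  have t_half: "t \<le> measure M ?N / 2" "t \<le> 1/2"
    unfolding t_def by (rule min.cobounded1, rule min.cobounded2)
  have "0 < t" unfolding t_def min_less_iff_conj using m by (intro conjI) linarith+
  then have t: "0 < t" "t < 1" using t_half by linarith+
  have "?N \<subseteq> {..<Gquant g t}"
  proof
    fix z assume "z \<in> ?N"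
    then show "z \<in> {..<Gquant g t}" using less_Gquant_iff[OF t, of z] t by simp
  qed
  then have "measure M ?N \<le> measure M {..<Gquant g t}"
    by (intro D.finite_measure_mono) auto
  also have "\<dots> = t" using Gcdf_Gquant[OF t] by (simp add: measure_lessThan_Gcdf)
  finally show False using m t_half by linarith
qed

lemma Gcdf_borel[measurable]: "Gcdf g \<in> borel_measurable borel"
  by (rule borel_measurable_mono) (auto simp: mono_def Gcdf_mono)

definition Gquant_ext :: "real \<Rightarrow> real" where
  "Gquant_ext t = (if t \<in> {0<..<1} then Gquant g t else 0)"

lemma Gquant_ext_borel[measurable]: "Gquant_ext \<in> borel_measurable borel"
proof -
  have "mono_on {0<..<1} (Gquant g)" by (auto simp: mono_on_def intro: Gquant_mono)
  then have "Gquant g \<in> borel_measurable (restrict_space borel {0<..<1})"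
    by (rule borel_measurable_mono_on_fnc)
  then show ?thesis
    using measurable_restrict_space_iff[of "{0<..<1::real}" borel 0 borel "Gquant g"]
    by (simp add: Gquant_ext_def[abs_def])
qed

text \<open>In particular \<open>{g > 0}\<close> is an interval, as needed to use the concavity of \<open>ln g\<close>.\<close>

lemma g_ge_min_endpoints: assumes "a \<le> y" "y \<le> b" shows "min (g a) (g b) \<le> g y"
proof -
  have g_abs: "g z = g \<bar>z\<bar>" for z using symm by (simp add: abs_if)
  have "\<bar>y\<bar> \<le> \<bar>a\<bar> \<or> \<bar>y\<bar> \<le> \<bar>b\<bar>" using assms by auto
  then show ?thesis
    using unimodal g_abs[of a] g_abs[of b] g_abs[of y] by (metis abs_ge_zero min.coboundedI1 min.coboundedI2)
qed

lemma density_shift_ratio: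
  assumes "t \<le> s" "0 \<le> h" shows "g t * g (s + h) \<le> g (t + h) * g s"
proof (cases "g t = 0 \<or> g (s + h) = 0 \<or> h = 0")
  case True
  then show ?thesis using g_nonneg[of "t+h"] g_nonneg[of s] by (auto simp: mult.commute)
next
  case False
  then have pos: "0 < g t" "0 < g (s+h)" "0 < h" using g_nonneg[of t] g_nonneg[of "s+h"] assms by auto
  have pos_th: "0 < g (t + h)" and pos_s: "0 < g s"
    using g_ge_min_endpoints[of t "t + h" "s + h"] g_ge_min_endpoints[of t s "s + h"] pos assms
    by (auto simp: min_def split: if_splits)
  define l where "l = (s - t) / (s + h - t)"
  have d: "0 < s + h - t" using assms pos by auto
  have l: "0 \<le> l" "l \<le> 1" "l * (s + h - t) = s - t" using assms d by (auto simp: l_def field_simps)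
  have comb1: "(1 - l) *\<^sub>R (s+h) + l *\<^sub>R t = t + h" and comb2: "(1 - l) *\<^sub>R t + l *\<^sub>R (s+h) = s"
    using l(3) by (simp_all add: algebra_simps)
  have "(1 - l) * ln (g (s+h)) + l * ln (g t) \<le> ln (g (t+h))"
    using concave_onD[OF logconcave, of l "s+h" t] l pos comb1 by simp
  moreover have "(1 - l) * ln (g t) + l * ln (g (s+h)) \<le> ln (g s)"
    using concave_onD[OF logconcave, of l t "s+h"] l pos comb2 by simp
  ultimately have "ln (g t * g (s + h)) \<le> ln (g (t + h) * g s)"
    using pos pos_th pos_s by (simp add: ln_mult algebra_simps)
  then show ?thesis using pos pos_th pos_s by simp
qed

text \<open>Integrating the first argument: \<open>G(a) g(s+h) \<le> G(a+h) g(s)\<close> for \<open>a \<le> s\<close>.\<close>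

lemma cdf_density_shift_ratio:
  assumes "a \<le> s" "0 \<le> h" shows "Gcdf g a * g (s + h) \<le> Gcdf g (a + h) * g s"
proof -
  have "ennreal (Gcdf g a) * ennreal (g (s + h))
      = (\<integral>\<^sup>+ t. ennreal (g t) * indicator {..a} t * ennreal (g (s + h)) \<partial>lborel)"
    by (simp add: Gcdf_def D.emeasure_eq_measure[symmetric] emeasure_M nn_integral_multc)
  also have "\<dots> \<le> (\<integral>\<^sup>+ t. ennreal (g (t + h)) * indicator {..a+h} (t + h) * ennreal (g s) \<partial>lborel)"
  proof (intro nn_integral_mono)
    fix t
    show "ennreal (g t) * indicator {..a} t * ennreal (g (s + h))
          \<le> ennreal (g (t + h)) * indicator {..a + h} (t + h) * ennreal (g s)"
    proof (cases "t \<le> a")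
      case True
      then have "g t * g (s + h) \<le> g (t + h) * g s" using density_shift_ratio[of t s h] assms by auto
      then show ?thesis using True g_nonneg
        by (simp add: ennreal_mult'[symmetric] ennreal_mult[symmetric] mult.commute mult.left_commute)
    qed auto
  qed
  also have "\<dots> = (\<integral>\<^sup>+ t. ennreal (g t) * indicator {..a+h} t * ennreal (g s) \<partial>lborel)"
    by (rule nn_integral_lborel_shift[where f="\<lambda>t. ennreal (g t) * indicator {..a+h} t * ennreal (g s)"]) simp
  also have "\<dots> = ennreal (Gcdf g (a + h)) * ennreal (g s)"
    by (simp add: Gcdf_def D.emeasure_eq_measure[symmetric] emeasure_M nn_integral_multc)
  finally show ?thesis using g_nonneg Gcdf_nonneg by (simp add: ennreal_mult[symmetric])
qed

text \<open>Integrating the second argument: \<open>G\<close> is logconcave in the sense that the shift ratio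
  \<open>G(x)/G(x+h)\<close> is nondecreasing.  This is the main tool of the whole argument.\<close>

lemma cdf_shift_ratio:
  assumes "a \<le> c" "0 \<le> h" shows "Gcdf g a * Gcdf g (c + h) \<le> Gcdf g (a + h) * Gcdf g c"
proof (cases "a = c")
  case True then show ?thesis by (simp add: mult.commute)
next
  case False
  then have ac: "a < c" using assms by auto
  have "ennreal (Gcdf g a) * emeasure M {a+h<..c+h}
     = (\<integral>\<^sup>+ s. ennreal (Gcdf g a) * (ennreal (g (s + h)) * indicator {a+h<..c+h} (s + h)) \<partial>lborel)"
    by (simp add: nn_integral_cmult emeasure_M
        nn_integral_lborel_shift[where f="\<lambda>s. ennreal (g s) * indicator {a+h<..c+h} s"])
  also have "\<dots> \<le> (\<integral>\<^sup>+ s. ennreal (Gcdf g (a+h)) * (ennreal (g s) * indicator {a<..c} s) \<partial>lborel)"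
  proof (intro nn_integral_mono)
    fix s
    show "ennreal (Gcdf g a) * (ennreal (g (s + h)) * indicator {a + h<..c + h} (s + h))
        \<le> ennreal (Gcdf g (a + h)) * (ennreal (g s) * indicator {a<..c} s)"
    proof (cases "a < s \<and> s \<le> c")
      case True
      then have "Gcdf g a * g (s + h) \<le> Gcdf g (a + h) * g s"
        using cdf_density_shift_ratio[of a s h] assms by auto
      then show ?thesis using True g_nonneg Gcdf_nonneg by (simp add: ennreal_mult[symmetric])
    qed auto
  qed
  also have "\<dots> = ennreal (Gcdf g (a+h)) * emeasure M {a<..c}"
    by (simp add: emeasure_M nn_integral_cmult)
  finally have "Gcdf g a * measure M {a+h<..c+h} \<le> Gcdf g (a+h) * measure M {a<..c}"
    using Gcdf_nonneg by (simp add: D.emeasure_eq_measure ennreal_mult[symmetric])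
  moreover have "measure M {a+h<..c+h} = Gcdf g (c+h) - Gcdf g (a+h)"
    and "measure M {a<..c} = Gcdf g c - Gcdf g a"
    using D.cdf_diff_eq[of "a+h" "c+h"] D.cdf_diff_eq[of a c] ac by (simp_all add: Gcdf_eq_cdf)
  ultimately show ?thesis by (simp add: algebra_simps)
qed

lemma cdf_shift_ratio_rigid:
  assumes "0 \<le> e" "t \<le> u" "u \<le> t + L"
    and eq: "Gcdf g t * Gcdf g (t + L + e) = Gcdf g (t + e) * Gcdf g (t + L)"
    and pos: "0 < Gcdf g t"
  shows "Gcdf g t * Gcdf g (u + e) = Gcdf g (t + e) * Gcdf g u"
proof (rule antisym)
  show "Gcdf g t * Gcdf g (u + e) \<le> Gcdf g (t + e) * Gcdf g u"
    using cdf_shift_ratio[of t u e] assms by simp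
  have "Gcdf g u * Gcdf g (t + L + e) \<le> Gcdf g (u + e) * Gcdf g (t + L)"
    using cdf_shift_ratio[of u "t + L" e] assms by (simp add: add.assoc)
  then have "Gcdf g t * (Gcdf g u * Gcdf g (t + L + e)) \<le> Gcdf g t * (Gcdf g (u + e) * Gcdf g (t + L))"
    using pos by (intro mult_left_mono) auto
  then have "Gcdf g (t + L) * (Gcdf g (t + e) * Gcdf g u) \<le> Gcdf g (t + L) * (Gcdf g t * Gcdf g (u + e))"
    by (simp add: mult.left_commute[of "Gcdf g t"] eq) (simp only: mult_ac)
  moreover have "0 < Gcdf g (t + L)" using pos Gcdf_mono[of t "t + L"] assms by linarith
  ultimately show "Gcdf g (t + e) * Gcdf g u \<le> Gcdf g t * Gcdf g (u + e)"
    by (rule mult_left_le_imp_le)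
qed

lemma cdf_geometric_on_grid:
  assumes "0 \<le> e"
    and eq: "Gcdf g t * Gcdf g (t + L + e) = Gcdf g (t + e) * Gcdf g (t + L)"
    and pos: "0 < Gcdf g t"
  shows "real k * e \<le> L + e \<Longrightarrow> Gcdf g (t + real k * e) = (Gcdf g (t + e) / Gcdf g t) ^ k * Gcdf g t"
proof (induction k)
  case 0 then show ?case by simp
next
  case (Suc k)
  let ?u = "t + real k * e"
  have "t \<le> ?u" "?u \<le> t + L" using Suc.prems assms(1) by (auto simp: algebra_simps)
  then have "Gcdf g t * Gcdf g (?u + e) = Gcdf g (t + e) * Gcdf g ?u"
    using cdf_shift_ratio_rigid assms by blast
  then have "Gcdf g (?u + e) = Gcdf g (t + e) / Gcdf g t * Gcdf g ?u"
    using pos by (simp add: field_simps)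
  moreover have "real k * e \<le> L + e" using Suc.prems assms(1) by (simp add: algebra_simps)
  ultimately show ?case using Suc.IH by (simp add: algebra_simps)
qed

end

locale hpd_setting = sym_logconcave_density +
  fixes \<alpha> :: real
  assumes alpha_pos: "0 < \<alpha>" and alpha_lt1: "\<alpha> < 1"
begin

abbreviation d0 :: real where "d0 \<equiv> hpd_d0 g \<alpha>"

lemma Gcdf_d0: "Gcdf g d0 = 1 / (1 + \<alpha>)"
  unfolding hpd_d0_def using alpha_pos by (intro Gcdf_Gquant) (auto simp: field_simps)

lemma d0_pos: "0 < d0"
  unfolding hpd_d0_def using alpha_pos alpha_lt1
  by (subst less_Gquant_iff) (auto simp: Gcdf_zero field_simps)

lemma Gcdf_minus_d0: "Gcdf g (- d0) = \<alpha> / (1 + \<alpha>)"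
  using Gcdf_reflect[of d0] Gcdf_d0 alpha_pos by (simp add: field_simps)

lemma Gcdf_minus_d0_ratio: "Gcdf g (- d0) = \<alpha> * Gcdf g d0"
  using Gcdf_minus_d0 Gcdf_d0 by simp

lemma Gcdf_d0_pos: "0 < Gcdf g d0"
  using Gcdf_d0 alpha_pos by simp

text \<open>The ratio \<open>G(z)/G(z + 2 d0)\<close> is nondecreasing and equals \<open>\<alpha>\<close> at \<open>z = -d0\<close>.\<close>

lemma Gcdf_shift_bound: assumes "z \<le> - d0" shows "Gcdf g z \<le> \<alpha> * Gcdf g (z + 2 * d0)"
proof -
  have "Gcdf g z * Gcdf g d0 \<le> Gcdf g (z + 2 * d0) * Gcdf g (- d0)"
    using cdf_shift_ratio[of z "- d0" "2 * d0"] assms d0_pos by simp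
  then have "Gcdf g z * Gcdf g d0 \<le> (\<alpha> * Gcdf g (z + 2 * d0)) * Gcdf g d0"
    by (simp add: Gcdf_minus_d0_ratio mult_ac)
  then show ?thesis using Gcdf_d0_pos by (rule mult_right_le_imp_le)
qed

lemma Gcdf_minus_3d0: "Gcdf g (- 3 * d0) \<le> \<alpha> ^ 2 / (1 + \<alpha>)"
proof -
  have "Gcdf g (- 3 * d0) \<le> \<alpha> * Gcdf g (- d0)"
    using Gcdf_shift_bound[of "- 3 * d0"] d0_pos by simp
  then show ?thesis using Gcdf_minus_d0 by (simp add: power2_eq_square)
qed

lemma Gcdf_shift_ratio_pinned:
  assumes "z \<le> t" "t \<le> - d0" and eq: "Gcdf g z = \<alpha> * Gcdf g (z + 2 * d0)"
    and pos: "0 < Gcdf g (z + 2 * d0)"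
  shows "Gcdf g t = \<alpha> * Gcdf g (t + 2 * d0)"
proof (rule antisym)
  show "Gcdf g t \<le> \<alpha> * Gcdf g (t + 2 * d0)" using Gcdf_shift_bound assms by simp
  have "Gcdf g z * Gcdf g (t + 2 * d0) \<le> Gcdf g (z + 2 * d0) * Gcdf g t"
    using cdf_shift_ratio[of z t "2 * d0"] assms d0_pos by simp
  then have "Gcdf g (z + 2 * d0) * (\<alpha> * Gcdf g (t + 2 * d0)) \<le> Gcdf g (z + 2 * d0) * Gcdf g t"
    unfolding eq by (simp only: mult_ac)
  then show "\<alpha> * Gcdf g (t + 2 * d0) \<le> Gcdf g t" using pos by (rule mult_left_le_imp_le)
qed

text \<open>The key strictness: equality at some \<open>z < -d0\<close> with \<open>G(z) > 0\<close> would make \<open>G\<close>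
  geometric on a grid through \<open>-d0, 0, d0\<close>, hence \<open>G(0)\<^sup>2 = G(-d0) G(d0)\<close>, i.e.
  \<open>(1 + \<alpha>)\<^sup>2 = 4 \<alpha>\<close>, impossible for \<open>\<alpha> < 1\<close>.\<close>

lemma Gcdf_shift_bound_strict:
  assumes "z < - d0" "0 < Gcdf g z" shows "Gcdf g z < \<alpha> * Gcdf g (z + 2 * d0)"
proof (rule ccontr)
  assume "\<not> ?thesis"
  then have eq: "Gcdf g z = \<alpha> * Gcdf g (z + 2 * d0)" using Gcdf_shift_bound[of z] assms by linarith
  then have pos: "0 < Gcdf g (z + 2 * d0)" using assms(2) alpha_pos by (simp add: zero_less_mult_iff)
  obtain n :: nat where n: "d0 / (- d0 - z) < real n" using reals_Archimedean2 by blast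
  have "0 < d0 / (- d0 - z)" using d0_pos assms by simp
  then have n_pos: "0 < real n" using n by linarith
  define e where "e = d0 / real n"
  define t where "t = - d0 - e"
  have e_pos: "0 < e" using n_pos d0_pos by (simp add: e_def)
  have ne: "real n * e = d0" using n_pos by (simp add: e_def)
  have "e \<le> - d0 - z"
    using n assms n_pos by (simp add: e_def divide_le_eq pos_divide_less_eq mult.commute)
  then have zt: "z \<le> t" "t \<le> - d0" using e_pos by (auto simp: t_def)
  have G_t: "Gcdf g t = \<alpha> * Gcdf g (t + 2 * d0)"
    using Gcdf_shift_ratio_pinned[OF zt eq pos] .
  have t_pos: "0 < Gcdf g t" using Gcdf_mono[OF zt(1)] assms(2) by linarith
  have grid_eq: "Gcdf g t * Gcdf g (t + 2 * d0 + e) = Gcdf g (t + e) * Gcdf g (t + 2 * d0)"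
    using G_t Gcdf_minus_d0_ratio by (simp add: t_def)
  define \<rho> where "\<rho> = Gcdf g (t + e) / Gcdf g t"
  have grid: "Gcdf g (t + real k * e) = \<rho> ^ k * Gcdf g t" if "k \<le> 2 * n + 1" for k
  proof (rule cdf_geometric_on_grid[OF _ grid_eq t_pos, folded \<rho>_def])
    show "real k * e \<le> 2 * d0 + e"
      using that e_pos mult_right_mono[of "real k" "2 * real n + 1" e] by (simp add: ne[symmetric] algebra_simps)
  qed (use e_pos in simp)
  have grid_points: "t + real 1 * e = - d0" "t + real (n + 1) * e = 0" "t + real (2 * n + 1) * e = d0"
    using ne by (simp_all add: t_def algebra_simps)
  have "Gcdf g (- d0) = \<rho> ^ 1 * Gcdf g t" "Gcdf g 0 = \<rho> ^ (n + 1) * Gcdf g t"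
    "Gcdf g d0 = \<rho> ^ (2 * n + 1) * Gcdf g t"
    using grid[of 1] grid[of "n + 1"] grid[of "2 * n + 1"] unfolding grid_points by simp_all
  then have "Gcdf g 0 * Gcdf g 0 = Gcdf g (- d0) * Gcdf g d0"
    by (simp add: power_add power_mult power2_eq_square mult_ac)
  then have "(1 + \<alpha>) * (1 + \<alpha>) = 4 * \<alpha>"
    using alpha_pos by (simp add: Gcdf_zero Gcdf_d0 Gcdf_minus_d0 field_simps)
  then have "(1 - \<alpha>) * (1 - \<alpha>) = 0" by (simp add: algebra_simps)
  then show False using alpha_lt1 by simp
qed

text \<open>The level \<open>\<tau>(x) = 1/2 + (1-\<alpha>)/2 G(x)\<close> of the quantile in the HPD bounds for \<open>x > d0\<close>.\<close>

definition tau :: "real \<Rightarrow> real" where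
  "tau x = 1/2 + (1-\<alpha>)/2 * Gcdf g x"

lemma tau_bounds: "0 < tau x" "tau x < 1" "tau x \<le> 1 - \<alpha>/2"
proof -
  have "0 \<le> (1-\<alpha>)/2 * Gcdf g x" using alpha_lt1 Gcdf_nonneg by simp
  moreover have "(1-\<alpha>)/2 * Gcdf g x \<le> (1-\<alpha>)/2"
    using alpha_lt1 Gcdf_le_1[of x] by (simp add: mult_left_le)
  ultimately show "0 < tau x" "tau x < 1" "tau x \<le> 1 - \<alpha>/2" using alpha_pos by (auto simp: tau_def)
qed

lemma tau_mono: "x \<le> y \<Longrightarrow> tau x \<le> tau y"
  using Gcdf_mono[of x y] alpha_lt1 by (simp add: tau_def mult_left_mono)

lemma tau_ge: assumes "d0 < x" shows "1 / (1 + \<alpha>) \<le> tau x"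
proof -
  have "tau d0 = 1 / (1 + \<alpha>)" using alpha_pos by (simp add: tau_def Gcdf_d0 field_simps)
  then show ?thesis using tau_mono[of d0 x] assms by simp
qed

lemma Gquant_ge_d0: assumes "1 / (1 + \<alpha>) \<le> t" "t < 1" shows "d0 \<le> Gquant g t"
  unfolding hpd_d0_def using assms alpha_pos by (intro Gquant_mono) auto

lemma alpha_Gcdf_lt1: "\<alpha> * Gcdf g x < 1"
  using mult_left_le[OF Gcdf_le_1[of x], of \<alpha>] alpha_pos alpha_lt1 by linarith

text \<open>The HPD bounds written with the Borel quantile \<open>Gquant_ext\<close>, to see they are measurable.\<close>

lemma hpd_lower_eq: "hpd_lower g \<alpha> = (\<lambda>x. if d0 < x then x - Gquant_ext (tau x) else 0)"
  using tau_bounds by (auto simp: fun_eq_iff hpd_lower_def Gquant_ext_def tau_def)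

lemma hpd_upper_eq:
  "hpd_upper g \<alpha> = (\<lambda>x. if x \<le> d0
      then x - (if 0 < Gcdf g x then Gquant_ext (\<alpha> * Gcdf g x) else Gquant g 0)
      else x + Gquant_ext (tau x))"
proof (rule ext)
  fix x
  have "Gcdf g x = 0" if "\<not> 0 < Gcdf g x" using that Gcdf_nonneg[of x] by linarith
  then show "hpd_upper g \<alpha> x = (if x \<le> d0
      then x - (if 0 < Gcdf g x then Gquant_ext (\<alpha> * Gcdf g x) else Gquant g 0)
      else x + Gquant_ext (tau x))"
    using tau_bounds[of x] alpha_Gcdf_lt1[of x] alpha_pos
    by (auto simp: hpd_upper_def Gquant_ext_def tau_def)
qed

lemma hpd_lower_borel[measurable]: "hpd_lower g \<alpha> \<in> borel_measurable borel"
  unfolding hpd_lower_eq tau_def by measurable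

lemma hpd_upper_borel[measurable]: "hpd_upper g \<alpha> \<in> borel_measurable borel"
  unfolding hpd_upper_eq tau_def by measurable

text \<open>The noise values \<open>z = X - \<theta>\<close> for which the interval covers \<open>\<theta>\<close>.\<close>

definition cover_set :: "real \<Rightarrow> real set" where
  "cover_set \<theta> = {z. hpd_lower g \<alpha> (z + \<theta>) \<le> \<theta> \<and> \<theta> \<le> hpd_upper g \<alpha> (z + \<theta>)}"

lemma cover_set_borel[measurable]: "cover_set \<theta> \<in> sets borel"
  unfolding cover_set_def by measurable

lemma coverage_eq_measure: "coverage g \<alpha> \<theta> = measure M (cover_set \<theta>)"
proof -
  let ?T = "{x. hpd_lower g \<alpha> x \<le> \<theta> \<and> \<theta> \<le> hpd_upper g \<alpha> x}"
  have T[measurable]: "?T \<in> sets borel" by measurable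
  have "emeasure (density lborel (\<lambda>x. ennreal (g (x - \<theta>)))) ?T
      = (\<integral>\<^sup>+ x. ennreal (g (x - \<theta>)) * indicator ?T x \<partial>lborel)"
    by (intro emeasure_density) auto
  also have "\<dots> = (\<integral>\<^sup>+ z. ennreal (g (z + \<theta> - \<theta>)) * indicator ?T (z + \<theta>) \<partial>lborel)"
    by (rule nn_integral_lborel_shift[symmetric, where f="\<lambda>x. ennreal (g (x - \<theta>)) * indicator ?T x"])
       measurable
  also have "\<dots> = emeasure M (cover_set \<theta>)"
    by (simp add: emeasure_M cover_set_def indicator_def)
  finally show ?thesis unfolding coverage_def by (simp add: measure_def)
qed

text \<open>The part of the cover set where the observation lies beyond \<open>d0\<close>.  There the HPD
  interval is \<open>x \<plusminus> Q(\<tau>(x))\<close>, so covering means \<open>|z| \<le> Q(\<tau>(z + \<theta>))\<close>.\<close>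

definition right_branch :: "real \<Rightarrow> real set" where
  "right_branch \<theta> = cover_set \<theta> \<inter> {z. d0 < z + \<theta>}"

lemma right_branch_borel[measurable]: "right_branch \<theta> \<in> sets borel"
  unfolding right_branch_def by measurable

lemma right_branch_iff: "z \<in> right_branch \<theta> \<longleftrightarrow> d0 < z + \<theta> \<and> \<bar>z\<bar> \<le> Gquant g (tau (z + \<theta>))"
  by (auto simp: right_branch_def cover_set_def hpd_lower_def hpd_upper_def tau_def abs_le_iff)

lemma right_branch_mono: assumes "\<theta> \<le> \<theta>'" shows "right_branch \<theta> \<subseteq> right_branch \<theta>'"
proof
  fix z assume "z \<in> right_branch \<theta>"
  then have z: "d0 < z + \<theta>" "\<bar>z\<bar> \<le> Gquant g (tau (z + \<theta>))" by (auto simp: right_branch_iff)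
  have "Gquant g (tau (z + \<theta>)) \<le> Gquant g (tau (z + \<theta>'))"
    using assms by (intro Gquant_mono tau_bounds tau_mono) auto
  then show "z \<in> right_branch \<theta>'" using z assms by (auto simp: right_branch_iff)
qed

text \<open>At \<open>\<theta> = 2 d0\<close> the left branch (\<open>x \<le> d0\<close>) only contributes \<open>z = -d0\<close> and points
  with \<open>G(z) = 0\<close>: this is where the strict bound \<open>Gcdf_shift_bound_strict\<close> enters.\<close>

lemma cover_set_2d0_subset:
  "cover_set (2 * d0) \<subseteq> right_branch (2 * d0) \<union> {z. Gcdf g z = 0} \<union> {- d0}"
proof
  fix z assume z_cov: "z \<in> cover_set (2 * d0)"
  show "z \<in> right_branch (2 * d0) \<union> {z. Gcdf g z = 0} \<union> {- d0}"
  proof (cases "d0 < z + 2 * d0")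
    case True then show ?thesis using z_cov by (auto simp: right_branch_def)
  next
    case False
    then have q: "Gquant g (\<alpha> * Gcdf g (z + 2 * d0)) \<le> z"
      using z_cov by (auto simp: cover_set_def hpd_upper_def)
    show ?thesis
    proof (rule ccontr)
      assume "\<not> ?thesis"
      then have z: "z < - d0" "0 < Gcdf g z" using False Gcdf_nonneg[of z] by (auto simp: order_le_less)
      have "Gcdf g z \<le> Gcdf g (z + 2 * d0)" using d0_pos by (intro Gcdf_mono) simp
      then have "0 < \<alpha> * Gcdf g (z + 2 * d0)"
        using z alpha_pos by (auto intro: mult_pos_pos)
      then have "\<alpha> * Gcdf g (z + 2 * d0) \<le> Gcdf g z"
        using Gquant_le_iff alpha_Gcdf_lt1 q by blast
      then show False using Gcdf_shift_bound_strict[OF z] by simp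
    qed
  qed
qed

lemma coverage_2d0_eq: "coverage g \<alpha> (2 * d0) = measure M (right_branch (2 * d0))"
proof (rule antisym)
  have "measure M (cover_set (2 * d0))
      \<le> measure M (right_branch (2 * d0) \<union> {z. Gcdf g z = 0} \<union> {- d0})"
    using cover_set_2d0_subset by (intro D.finite_measure_mono) auto
  also have "\<dots> \<le> measure M (right_branch (2 * d0)) + measure M {z. Gcdf g z = 0} + measure M {- d0}"
    by (intro order.trans[OF measure_subadditive] add_right_mono measure_subadditive)
       (auto intro: D.emeasure_finite)
  finally show "coverage g \<alpha> (2 * d0) \<le> measure M (right_branch (2 * d0))"
    by (simp add: coverage_eq_measure measure_Gcdf_zero measure_M_singleton)
  show "measure M (right_branch (2 * d0)) \<le> coverage g \<alpha> (2 * d0)"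
    unfolding coverage_eq_measure by (intro D.finite_measure_mono) (auto simp: right_branch_def)
qed

lemma coverage_ge_2d0: assumes "2 * d0 \<le> \<theta>" shows "coverage g \<alpha> (2 * d0) \<le> coverage g \<alpha> \<theta>"
proof -
  have "coverage g \<alpha> (2 * d0) = measure M (right_branch (2 * d0))" by (rule coverage_2d0_eq)
  also have "\<dots> \<le> measure M (right_branch \<theta>)"
    using right_branch_mono[OF assms] by (intro D.finite_measure_mono) auto
  also have "\<dots> \<le> measure M (cover_set \<theta>)"
    by (intro D.finite_measure_mono) (auto simp: right_branch_def)
  finally show ?thesis by (simp add: coverage_eq_measure)
qed

text \<open>Part (ii): \<open>S(2 d0) \<subseteq> ]-d0, Q(1 - \<alpha>/2)]\<close>, since \<open>\<tau> \<le> 1 - \<alpha>/2\<close>.\<close>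

lemma coverage_2d0_upper: "coverage g \<alpha> (2 * d0) \<le> 1 - 3 * \<alpha> / 2 + \<alpha>\<^sup>2 / (1 + \<alpha>)"
proof -
  let ?c = "Gquant g (1 - \<alpha>/2)"
  have c: "0 < 1 - \<alpha>/2" "1 - \<alpha>/2 < 1" using alpha_pos alpha_lt1 by auto
  have sub: "right_branch (2 * d0) \<subseteq> {- d0<..?c}"
  proof
    fix z assume "z \<in> right_branch (2 * d0)"
    then have z: "d0 < z + 2 * d0" "\<bar>z\<bar> \<le> Gquant g (tau (z + 2 * d0))" by (auto simp: right_branch_iff)
    have "Gquant g (tau (z + 2 * d0)) \<le> ?c" using tau_bounds by (intro Gquant_mono c) auto
    then show "z \<in> {- d0<..?c}" using z by auto
  qed
  have "1 / (1 + \<alpha>) \<le> 1 - \<alpha>/2" using tau_ge[of "d0 + 1"] tau_bounds(3)[of "d0 + 1"] by linarith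
  then have "- d0 < ?c" using Gquant_ge_d0 c d0_pos by fastforce
  then have "measure M {- d0<..?c} = Gcdf g ?c - Gcdf g (- d0)"
    using D.cdf_diff_eq[of "- d0" ?c] by (simp add: Gcdf_eq_cdf)
  also have "\<dots> = 1 - \<alpha>/2 - \<alpha> / (1 + \<alpha>)" using Gcdf_Gquant[OF c] Gcdf_minus_d0 by simp
  also have "\<dots> = 1 - 3 * \<alpha> / 2 + \<alpha>\<^sup>2 / (1 + \<alpha>)"
    using alpha_pos by (simp add: field_simps power2_eq_square)
  finally show ?thesis
    using D.finite_measure_mono[OF sub] by (simp add: coverage_2d0_eq)
qed

text \<open>Part (i), second claim: \<open>]-d0, Q(\<tau>(3 d0))[ \<subseteq> S(2 d0)\<close>, and \<open>G(3 d0) \<ge> 1 - \<alpha>\<^sup>2/(1+\<alpha>)\<close>.\<close>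

lemma coverage_2d0_lower: "1 - 3 * \<alpha> / 2 \<le> coverage g \<alpha> (2 * d0)"
proof -
  let ?\<gamma> = "tau (3 * d0)"
  let ?q = "Gquant g ?\<gamma>"
  have \<gamma>: "0 < ?\<gamma>" "?\<gamma> < 1" "1 / (1 + \<alpha>) \<le> ?\<gamma>" using tau_bounds tau_ge[of "3 * d0"] d0_pos by auto
  have q_ge: "d0 \<le> ?q" using Gquant_ge_d0 \<gamma> by auto
  have sub: "{- d0<..<?q} \<subseteq> right_branch (2 * d0)"
  proof
    fix z assume z: "z \<in> {- d0<..<?q}"
    have x: "d0 < z + 2 * d0" using z by auto
    have qx: "d0 \<le> Gquant g (tau (z + 2 * d0))" using Gquant_ge_d0 tau_ge[OF x] tau_bounds by auto
    have "\<bar>z\<bar> \<le> Gquant g (tau (z + 2 * d0))"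
    proof (cases "z \<le> d0")
      case True then show ?thesis using z qx by auto
    next
      case False
      then have "?q \<le> Gquant g (tau (z + 2 * d0))"
        using \<gamma> tau_bounds by (intro Gquant_mono tau_mono) auto
      then show ?thesis using z False by auto
    qed
    then show "z \<in> right_branch (2 * d0)" using x by (simp add: right_branch_iff)
  qed
  have "measure M {- d0<..<?q} = measure M ({..<?q} - {..- d0})"
    by (rule arg_cong[where f="measure M"]) auto
  also have "\<dots> = ?\<gamma> - \<alpha> / (1 + \<alpha>)"
    using q_ge d0_pos Gcdf_Gquant[OF \<gamma>(1,2)] Gcdf_minus_d0
    by (subst D.finite_measure_Diff) (auto simp: measure_lessThan_Gcdf Gcdf_def[symmetric])
  finally have m: "measure M {- d0<..<?q} = ?\<gamma> - \<alpha> / (1 + \<alpha>)" .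
  have "1 - \<alpha>^2 / (1 + \<alpha>) \<le> Gcdf g (3 * d0)"
    using Gcdf_reflect[of "3 * d0"] Gcdf_minus_3d0 by simp
  then have "1/2 + (1-\<alpha>)/2 * (1 - \<alpha>^2 / (1 + \<alpha>)) - \<alpha> / (1 + \<alpha>) \<le> ?\<gamma> - \<alpha> / (1 + \<alpha>)"
    using alpha_lt1 by (simp add: tau_def mult_left_mono)
  moreover have "1/2 + (1-\<alpha>)/2 * (1 - \<alpha>^2 / (1 + \<alpha>)) - \<alpha> / (1 + \<alpha>) = 1 - 3 * \<alpha> / 2 + \<alpha>^2 / 2"
    using alpha_pos by (simp add: divide_simps) algebra
  moreover have "0 \<le> \<alpha>^2 / 2" by simp
  ultimately have "1 - 3 * \<alpha> / 2 \<le> measure M {- d0<..<?q}" using m by linarith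
  also have "\<dots> \<le> measure M (right_branch (2 * d0))" using sub by (intro D.finite_measure_mono) auto
  finally show ?thesis by (simp add: coverage_2d0_eq)
qed

end

theorem lemma7:
  fixes g :: "real \<Rightarrow> real" and \<alpha> :: real
  assumes dens: "is_density g"
    and symm: "\<forall>z. g (- z) = g z"
    and unimodal: "\<forall>x y. 0 \<le> x \<longrightarrow> x \<le> y \<longrightarrow> g y \<le> g x"
    and logconcave: "concave_on {x. 0 < g x} (\<lambda>x. ln (g x))"
    and alpha: "0 < \<alpha>" "\<alpha> < 1"
  shows "(\<forall>\<theta>\<ge>2 * hpd_d0 g \<alpha>. coverage g \<alpha> \<theta> \<ge> coverage g \<alpha> (2 * hpd_d0 g \<alpha>))
       \<and> coverage g \<alpha> (2 * hpd_d0 g \<alpha>) \<ge> 1 - 3 * \<alpha> / 2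
       \<and> coverage g \<alpha> (2 * hpd_d0 g \<alpha>) \<le> 1 - 3 * \<alpha> / 2 + \<alpha>\<^sup>2 / (1 + \<alpha>)"
proof -
  interpret hpd_setting g \<alpha>
    using dens symm unimodal logconcave alpha by unfold_locales auto
  show ?thesis
    using coverage_ge_2d0 coverage_2d0_lower coverage_2d0_upper by blast
qed

end
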